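(* Let $V$ be a set of $n$ vertices partitioned into $k$ clusters of sizes $s_1\ge s_2\ge\dots\ge s_k$ (so $\sum_i s_i=n$). If $s_k<\frac{n}{4k}$, then there exists $h<k$ such that $$s_h\ge\frac{n}{2k}-h\cdot\frac{n}{4k^2}\quad\text{and}\quad s_{h+1}<\frac{n}{2k}-(h+1)\cdot\frac{n}{4k^2}.$$ Moreover, $\sum_{i\le h}s_i\ge n/2$. *)

theory Defs
  imports Complex_Main
begin

end

theory Submission
  imports Defs
begin

text \<open>Write \<open>t i = n/(2k) - i n/(4k\<^sup>2)\<close>. Since the largest cluster is at least the average
  \<open>n/k \<ge> t 1\<close> while \<open>s\<^sub>k < n/(4k) = t k\<close>, the sizes cross the decreasing line \<open>t\<close> at
  some \<open>h < k\<close>. Every cluster after \<open>h\<close> then has fewer than \<open>t (h+1) \<le> n/(2k)\<close> vertices,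
  so the at most \<open>k\<close> clusters after \<open>h\<close> hold fewer than \<open>n/2\<close> vertices together.\<close>

lemma nat_exists_crossing:
  assumes "m \<le> n" and "P m" and "\<not> P n"
  shows "\<exists>i. m \<le> i \<and> i < n \<and> P i \<and> \<not> P (Suc i)"
proof (rule ccontr)
  assume no_crossing: "\<nexists>i. m \<le> i \<and> i < n \<and> P i \<and> \<not> P (Suc i)"
  from assms(1,2) have "P n"
    by (induction rule: dec_induct) (use no_crossing in auto)
  with assms(3) show False by contradiction
qed

lemma card_eq_sum_card_partition:
  assumes "finite V" and "finite I" and "(\<Union>i\<in>I. C i) = V"
    and "\<forall>i\<in>I. \<forall>j\<in>I. i \<noteq> j \<longrightarrow> C i \<inter> C j = {}"
  shows "card V = (\<Sum>i\<in>I. card (C i))"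
proof -
  have "finite (C i)" if "i \<in> I" for i
    using assms(1,3) that by (auto intro: finite_subset)
  with assms(2,4) show ?thesis
    unfolding assms(3)[symmetric] by (intro card_UN_disjoint) auto
qed

lemma sum_head_ge_half:
  fixes s :: "nat \<Rightarrow> real"
  assumes antitone: "\<And>i j. 1 \<le> i \<Longrightarrow> i \<le> j \<Longrightarrow> j \<le> k \<Longrightarrow> s j \<le> s i"
    and total: "(\<Sum>i=1..k. s i) = N" and "0 \<le> N"
    and "h < k" and small: "s (h + 1) \<le> N / (2 * real k)"
  shows "(\<Sum>i=1..h. s i) \<ge> N / 2"
proof -
  have "s i \<le> N / (2 * real k)" if "i \<in> {h+1..k}" for i
    using antitone[of "h + 1" i] small that by simp
  then have "(\<Sum>i=h+1..k. s i) \<le> real (card {h+1..k}) * (N / (2 * real k))"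
    by (rule sum_bounded_above)
  also have "\<dots> \<le> real k * (N / (2 * real k))"
    using \<open>0 \<le> N\<close> by (intro mult_right_mono) auto
  also have "\<dots> = N / 2"
    using \<open>h < k\<close> by simp
  finally have tail: "(\<Sum>i=h+1..k. s i) \<le> N / 2" .
  have "N = (\<Sum>i=1..h. s i) + (\<Sum>i=h+1..k. s i)"
    using total sum.ub_add_nat[of 1 h s "k - h"] \<open>h < k\<close> by simp
  with tail show ?thesis
    by linarith
qed

lemma antitone_crosses_threshold:
  fixes s :: "nat \<Rightarrow> real"
  assumes antitone: "\<And>i j. 1 \<le> i \<Longrightarrow> i \<le> j \<Longrightarrow> j \<le> k \<Longrightarrow> s j \<le> s i"
    and total: "(\<Sum>i=1..k. s i) = N" and "0 \<le> N" and "0 < k"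
    and small_last: "s k < N / (4 * real k)"
  shows "\<exists>h. 1 \<le> h \<and> h < k
    \<and> s h \<ge> N / (2 * real k) - real h * (N / (4 * real k ^ 2))
    \<and> s (h + 1) < N / (2 * real k) - real (h + 1) * (N / (4 * real k ^ 2))
    \<and> (\<Sum>i=1..h. s i) \<ge> N / 2"
proof -
  define t where "t i = N / (2 * real k) - real i * (N / (4 * real k ^ 2))" for i :: nat
  have "N \<le> real k * s 1"
    using total sum_bounded_above[of "{1..k}" s "s 1"] antitone \<open>0 < k\<close> by simp
  then have "N / real k \<le> s 1"
    using \<open>0 < k\<close> by (simp add: field_simps)
  moreover have "t 1 \<le> N / real k"
    using \<open>0 \<le> N\<close> \<open>0 < k\<close> by (simp add: t_def field_simps)
  ultimately have "t 1 \<le> s 1"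
    by linarith
  moreover have "\<not> t k \<le> s k"
    using small_last \<open>0 < k\<close> by (simp add: t_def field_simps power2_eq_square)
  ultimately obtain h where h: "1 \<le> h" "h < k" "t h \<le> s h" "\<not> t (Suc h) \<le> s (Suc h)"
    using nat_exists_crossing[of 1 k "\<lambda>i. t i \<le> s i"] \<open>0 < k\<close> by auto
  have "t (h + 1) \<le> N / (2 * real k)"
    using \<open>0 \<le> N\<close> by (simp add: t_def)
  then have "(\<Sum>i=1..h. s i) \<ge> N / 2"
    using h by (intro sum_head_ge_half[OF antitone total \<open>0 \<le> N\<close>]) auto
  with h show ?thesis
    unfolding t_def by auto
qed

theorem lemma4p2:
  fixes V :: "'a set" and C :: "nat \<Rightarrow> 'a set" and k n :: nat
  assumes "finite V" and "card V = n" and "0 < k"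
    and "\<forall>i\<in>{1..k}. C i \<noteq> {}"
    and "\<forall>i\<in>{1..k}. \<forall>j\<in>{1..k}. i \<noteq> j \<longrightarrow> C i \<inter> C j = {}"
    and "(\<Union>i\<in>{1..k}. C i) = V"
    and "\<forall>i j. 1 \<le> i \<longrightarrow> i \<le> j \<longrightarrow> j \<le> k \<longrightarrow> card (C j) \<le> card (C i)"
    and "real (card (C k)) < real n / (4 * real k)"
  shows "\<exists>h. 1 \<le> h \<and> h < k
    \<and> real (card (C h)) \<ge> real n / (2 * real k) - real h * (real n / (4 * real k ^ 2))
    \<and> real (card (C (h + 1))) < real n / (2 * real k) - real (h + 1) * (real n / (4 * real k ^ 2))
    \<and> (\<Sum>i=1..h. real (card (C i))) \<ge> real n / 2"
proof -
  have "n = (\<Sum>i=1..k. card (C i))"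
    using card_eq_sum_card_partition[of V "{1..k}" C] assms(1,2,5,6) by simp
  then have "(\<Sum>i=1..k. real (card (C i))) = real n"
    by simp
  then show ?thesis
    using assms(3,7,8) by (intro antitone_crosses_threshold) auto
qed

end
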